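(* Let $K$ and $L$ be finite simplicial complexes. If $K$ and $L$ have the same simple homotopy type, then $\det(K)=\det(L)$, where $\det(K):=|\det(\mathcal{X}(K)_M)|$.
   Context: $\mathcal{X}(K)$ is the face poset of $K$ (simplices ordered by inclusion). For a finite poset $X=\{x_1,\dots,x_n\}$ (with a labelling), $X_M=(x_{i,j})$ is the $n\times n$ matrix with $x_{i,j}=0$ if $x_i\le x_j$ and $x_{i,j}=1$ otherwise. Simple homotopy type of simplicial complexes is in the classical sense of Whitehead (finite sequences of elementary collapses and expansions). *)

theory Defs
  imports Main "Jordan_Normal_Form.Determinant"
begin

definition simplicial_complex :: "'a set set \<Rightarrow> bool" where
  "simplicial_complex K \<longleftrightarrow> finite K \<and>
     (\<forall>s\<in>K. finite s \<and> s \<noteq> {}) \<and>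
     (\<forall>s\<in>K. \<forall>t. t \<subseteq> s \<and> t \<noteq> {} \<longrightarrow> t \<in> K)"

definition elementary_collapse :: "'a set set \<Rightarrow> 'a set set \<Rightarrow> bool" where
  "elementary_collapse K L \<longleftrightarrow> simplicial_complex K \<and>
     (\<exists>\<sigma> \<tau>. \<sigma> \<in> K \<and> \<tau> \<in> K \<and> \<tau> \<subset> \<sigma> \<and> card \<sigma> = card \<tau> + 1 \<and>
        (\<forall>\<rho>\<in>K. \<tau> \<subset> \<rho> \<longrightarrow> \<rho> = \<sigma>) \<and> L = K - {\<sigma>, \<tau>})"

definition simplicial_iso :: "'a set set \<Rightarrow> 'a set set \<Rightarrow> bool" where
  "simplicial_iso K L \<longleftrightarrow> (\<exists>f. inj_on f (\<Union>K) \<and> L = (\<lambda>s. f ` s) ` K)"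

definition sh_step :: "'a set set \<Rightarrow> 'a set set \<Rightarrow> bool" where
  "sh_step K L \<longleftrightarrow> elementary_collapse K L \<or> elementary_collapse L K \<or> simplicial_iso K L"

definition same_simple_homotopy_type :: "'a set set \<Rightarrow> 'a set set \<Rightarrow> bool" where
  "same_simple_homotopy_type K L \<longleftrightarrow> sh_step\<^sup>*\<^sup>* K L"

definition poset_matrix :: "('b \<Rightarrow> 'b \<Rightarrow> bool) \<Rightarrow> nat \<Rightarrow> (nat \<Rightarrow> 'b) \<Rightarrow> int mat" where
  "poset_matrix ord n x = mat n n (\<lambda>(i,j). if ord (x i) (x j) then 0 else 1)"

definition complex_det :: "'a set set \<Rightarrow> int" where
  "complex_det K = \<bar>det (poset_matrix (\<subseteq>) (card K)
       (SOME x. bij_betw x {..<card K} K))\<bar>"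

end

theory Submission
  imports Defs
begin

text \<open>Label the simplices of \<open>K\<close> and let \<open>Z\<close> be the zeta matrix of the face poset. An
  alternating sum over a Boolean interval \<open>[a, b]\<close> vanishes unless \<open>a = b\<close>, so \<open>Z\<close> is
  inverted by the Moebius matrix of the face poset, whose entries add up to the Euler
  characteristic \<open>\<chi>(K)\<close>. As \<open>\<X>(K)\<^sub>M\<close> is the all-ones matrix minus \<open>Z\<close>, the matrix determinant
  lemma gives \<open>det(K) = |1 - \<chi>(K)|\<close>. Finally \<open>\<chi>\<close> is invariant under isomorphisms and under
  elementary collapses, which remove two faces of consecutive dimensions.\<close>

lemma sum_minus_one_power_card_interval:
  assumes "finite B" and "A \<subseteq> B"
  shows "(\<Sum>s | A \<subseteq> s \<and> s \<subseteq> B. (-1::'b::ring_1) ^ card s)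
    = (if A = B then (-1) ^ card A else 0)"
proof (cases "A = B")
  case True
  then have "{s. A \<subseteq> s \<and> s \<subseteq> B} = {A}" by auto
  then show ?thesis using True by simp
next
  case False
  then have "A \<subset> B" using assms(2) by blast
  have "finite {s. A \<subseteq> s \<and> s \<subseteq> B}"
    using assms(1) by (rule finite_subset[rotated, OF finite_Pow_iff[THEN iffD2]]) auto
  then show ?thesis
    using card_subsupersets_even_odd[OF assms(1) \<open>A \<subset> B\<close>] False
    by (auto intro!: sum_alternating_cancels simp: conj_commute conj_left_commute)
qed

lemma simplicial_complex_sum_interval:
  assumes K: "simplicial_complex K" and "a \<in> K" and "c \<in> K"
  shows "(\<Sum>s\<in>K. if a \<subseteq> s \<and> s \<subseteq> c then (-1::int) ^ card s else 0)
    = (if a = c then (-1) ^ card a else 0)"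
proof (cases "a \<subseteq> c")
  case True
  have "{s\<in>K. a \<subseteq> s \<and> s \<subseteq> c} = {s. a \<subseteq> s \<and> s \<subseteq> c}"
    using K assms(2,3) unfolding simplicial_complex_def by blast
  moreover have "finite K" and "finite c"
    using K assms(3) unfolding simplicial_complex_def by auto
  ultimately show ?thesis
    using sum_minus_one_power_card_interval[OF \<open>finite c\<close> True]
    by (simp add: sum.inter_filter[symmetric])
next
  case False
  then have "(\<Sum>s\<in>K. if a \<subseteq> s \<and> s \<subseteq> c then (-1::int) ^ card s else 0) = 0"
    by (intro sum.neutral) auto
  with False show ?thesis by auto
qed

lemma simplicial_complex_sum_faces:
  assumes K: "simplicial_complex K" and "c \<in> K"
  shows "(\<Sum>a\<in>K. if a \<subseteq> c then (-1::int) ^ card a else 0) = -1"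
proof -
  have "finite K" and "finite c" and "c \<noteq> {}"
    using K assms(2) unfolding simplicial_complex_def by auto
  have "{a\<in>K. a \<subseteq> c} = {a. {} \<subseteq> a \<and> a \<subseteq> c} - {{}}"
    using K assms(2) unfolding simplicial_complex_def by blast
  then have "(\<Sum>a\<in>K. if a \<subseteq> c then (-1::int) ^ card a else 0)
      = (\<Sum>a | {} \<subseteq> a \<and> a \<subseteq> c. (-1::int) ^ card a) - 1"
    using \<open>finite K\<close> \<open>finite c\<close> by (simp add: sum.inter_filter[symmetric] sum_diff1)
  also have "\<dots> = -1"
    using sum_minus_one_power_card_interval[OF \<open>finite c\<close>, of "{}"] \<open>c \<noteq> {}\<close> by simp
  finally show ?thesis .
qed

definition euler_characteristic :: "'a set set \<Rightarrow> int" where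
  "euler_characteristic K = (\<Sum>s\<in>K. (-1) ^ (card s - 1))"

lemma euler_characteristic_elementary_collapse:
  assumes "elementary_collapse K L"
  shows "euler_characteristic L = euler_characteristic K"
proof -
  from assms obtain \<sigma> \<tau> where K: "simplicial_complex K" and "\<sigma> \<in> K" "\<tau> \<in> K" "\<tau> \<subset> \<sigma>"
    and card_\<sigma>: "card \<sigma> = card \<tau> + 1" and L: "L = K - {\<sigma>, \<tau>}"
    unfolding elementary_collapse_def by blast
  have "finite K" and "card \<tau> > 0"
    using K \<open>\<tau> \<in> K\<close> unfolding simplicial_complex_def by (auto simp: card_gt_0_iff)
  then have "(\<Sum>s\<in>{\<sigma>, \<tau>}. (-1::int) ^ (card s - 1)) = 0"
    using \<open>\<tau> \<subset> \<sigma>\<close> card_\<sigma> by (simp add: power_eq_if)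
  then show ?thesis
    unfolding euler_characteristic_def L
    using \<open>finite K\<close> \<open>\<sigma> \<in> K\<close> \<open>\<tau> \<in> K\<close> by (simp add: sum_diff)
qed

lemma euler_characteristic_simplicial_iso:
  assumes "simplicial_iso K L"
  shows "euler_characteristic L = euler_characteristic K"
proof -
  from assms obtain f where f: "inj_on f (\<Union>K)" and L: "L = (\<lambda>s. f ` s) ` K"
    unfolding simplicial_iso_def by blast
  have card_eq: "card (f ` s) = card s" if "s \<in> K" for s
    using that by (meson Sup_upper card_image f inj_on_subset)
  have "inj_on (\<lambda>s. f ` s) K"
    using inj_on_image_eq_iff[OF f] by (simp add: inj_on_def Sup_upper)
  then show ?thesis
    unfolding euler_characteristic_def L by (simp add: sum.reindex card_eq)
qed

lemma euler_characteristic_simple_homotopy_invariant: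
  assumes "same_simple_homotopy_type K L"
  shows "euler_characteristic K = euler_characteristic L"
  using assms unfolding same_simple_homotopy_type_def
proof (induction rule: rtranclp_induct)
  case (step L M)
  then show ?case
    unfolding sh_step_def
    using euler_characteristic_elementary_collapse euler_characteristic_simplicial_iso by metis
qed simp

lemma det_one_minus_mult_commute:
  fixes U V :: "'a::idom mat"
  assumes U: "U \<in> carrier_mat n m" and V: "V \<in> carrier_mat m n"
  shows "det (1\<^sub>m n - U * V) = det (1\<^sub>m m - V * U)"
proof -
  let ?M = "four_block_mat (1\<^sub>m m) V U (1\<^sub>m n)"
  let ?L = "four_block_mat (1\<^sub>m m) (0\<^sub>m m n) U (1\<^sub>m n)"
  let ?R = "four_block_mat (1\<^sub>m m) V (0\<^sub>m n m) (1\<^sub>m n - U * V)"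
  let ?R' = "four_block_mat (1\<^sub>m m - V * U) V (0\<^sub>m n m) (1\<^sub>m n)"
  have UV: "1\<^sub>m n - U * V \<in> carrier_mat n n" and VU: "1\<^sub>m m - V * U \<in> carrier_mat m m"
    using U V by auto
  have L: "?L \<in> carrier_mat (m + n) (m + n)" and R: "?R \<in> carrier_mat (m + n) (m + n)"
    and R': "?R' \<in> carrier_mat (m + n) (m + n)"
    using U V UV VU by (auto intro!: four_block_carrier_mat)
  have "?M = ?L * ?R"
    using U V by (subst mult_four_block_mat[of _ m m _ n _ n _ _ m]) auto
  then have "det ?M = det (1\<^sub>m n - U * V)"
    using det_four_block_mat_upper_right_zero[OF one_carrier_mat refl U one_carrier_mat]
      det_four_block_mat_lower_left_zero[OF one_carrier_mat V refl UV]
    by (simp add: det_mult[OF L R])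
  moreover have "?M = ?R' * ?L"
    using U V VU by (subst mult_four_block_mat[of _ m m _ n _ n _ _ m]) auto
  then have "det ?M = det (1\<^sub>m m - V * U)"
    using det_four_block_mat_upper_right_zero[OF one_carrier_mat refl U one_carrier_mat]
      det_four_block_mat_lower_left_zero[OF VU V refl one_carrier_mat]
    by (simp add: det_mult[OF R' L])
  ultimately show ?thesis by simp
qed

lemma det_minus_all_ones_mat:
  fixes A W :: "'a::idom mat"
  assumes A: "A \<in> carrier_mat n n" and W: "W \<in> carrier_mat n n" and AW: "A * W = 1\<^sub>m n"
  shows "det (A - mat n n (\<lambda>_. 1)) = det A * (1 - (\<Sum>i<n. \<Sum>j<n. W $$ (i, j)))"
proof -
  define U :: "'a mat" where "U = mat n 1 (\<lambda>_. 1)"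
  define V :: "'a mat" where "V = mat 1 n (\<lambda>_. 1)"
  have U: "U \<in> carrier_mat n 1" and V: "V \<in> carrier_mat 1 n" and WU: "W * U \<in> carrier_mat n 1"
    using W by (auto simp: U_def V_def)
  have ones: "mat n n (\<lambda>_. 1) = U * V"
    by (rule eq_matI) (auto simp: U_def V_def scalar_prod_def)
  have "A * (W * U * V) = U * V"
    using assoc_mult_mat[OF W U V] assoc_mult_mat[OF A W mult_carrier_mat[OF U V]] AW U V by simp
  then have "A * (1\<^sub>m n - W * U * V) = A - U * V"
    using A W U V by (subst mult_minus_distrib_mat[of _ n n]) auto
  then have "det (A - mat n n (\<lambda>_. 1)) = det (A * (1\<^sub>m n - W * U * V))"
    by (simp add: ones)
  also have "\<dots> = det A * det (1\<^sub>m n - W * U * V)"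
    using W U V by (intro det_mult[OF A]) auto
  also have "det (1\<^sub>m n - W * U * V) = det (1\<^sub>m 1 - V * (W * U))"
    using WU V by (rule det_one_minus_mult_commute)
  also have "det (1\<^sub>m 1 - V * (W * U)) = 1 - (V * (W * U)) $$ (0, 0)"
    using V WU by (subst det_single) (auto intro!: minus_carrier_mat)
  also have "(V * (W * U)) $$ (0, 0) = (\<Sum>i<n. \<Sum>j<n. W $$ (i, j))"
    using W by (simp add: U_def V_def scalar_prod_def lessThan_atLeast0)
  finally show ?thesis .
qed

definition zeta_mat :: "('b \<Rightarrow> 'b \<Rightarrow> bool) \<Rightarrow> nat \<Rightarrow> (nat \<Rightarrow> 'b) \<Rightarrow> int mat" where
  "zeta_mat ord n x = mat n n (\<lambda>(i, j). if ord (x i) (x j) then 1 else 0)"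

lemma poset_matrix_eq_neg_zeta_minus_ones:
  "poset_matrix ord n x = (-1) \<cdot>\<^sub>m (zeta_mat ord n x - mat n n (\<lambda>_. 1))"
  by (rule eq_matI) (auto simp: poset_matrix_def zeta_mat_def)

text \<open>The Moebius function of the face poset is \<open>\<mu>(a, b) = (-1)^(|b| - |a|)\<close> for \<open>a \<subseteq> b\<close>,
  written here without natural-number subtraction.\<close>
definition face_mobius_mat :: "nat \<Rightarrow> (nat \<Rightarrow> 'a set) \<Rightarrow> int mat" where
  "face_mobius_mat n x =
     mat n n (\<lambda>(i, j). if x i \<subseteq> x j then (-1) ^ (card (x i) + card (x j)) else 0)"

lemma zeta_mat_mult_face_mobius_mat:
  assumes K: "simplicial_complex K" and x: "bij_betw x {..<n} K"
  shows "zeta_mat (\<subseteq>) n x * face_mobius_mat n x = 1\<^sub>m n"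
proof (rule eq_matI)
  fix i k assume "i < dim_row (1\<^sub>m n)" and "k < dim_col (1\<^sub>m n)"
  then have i: "i < n" and k: "k < n" by auto
  then have "x i \<in> K" and "x k \<in> K" and "x i = x k \<longleftrightarrow> i = k"
    using x by (auto simp: bij_betw_def inj_on_def)
  have "(zeta_mat (\<subseteq>) n x * face_mobius_mat n x) $$ (i, k)
      = (\<Sum>j<n. (if x i \<subseteq> x j \<and> x j \<subseteq> x k then (-1) ^ card (x j) else 0) * (-1) ^ card (x k))"
    using i k by (auto simp: zeta_mat_def face_mobius_mat_def scalar_prod_def lessThan_atLeast0
        power_add intro!: sum.cong)
  also have "\<dots> = (\<Sum>s\<in>K. (if x i \<subseteq> s \<and> s \<subseteq> x k then (-1) ^ card s else 0) * (-1) ^ card (x k))"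
    by (rule sum.reindex_bij_betw[OF x])
  also have "\<dots> = 1\<^sub>m n $$ (i, k)"
    using simplicial_complex_sum_interval[OF K \<open>x i \<in> K\<close> \<open>x k \<in> K\<close>] \<open>x i = x k \<longleftrightarrow> i = k\<close> i k
    by (auto simp: sum_distrib_right[symmetric] simp flip: power_add)
  finally show "(zeta_mat (\<subseteq>) n x * face_mobius_mat n x) $$ (i, k) = 1\<^sub>m n $$ (i, k)" .
qed (auto simp: zeta_mat_def face_mobius_mat_def)

lemma sum_face_mobius_mat:
  assumes K: "simplicial_complex K" and x: "bij_betw x {..<n} K"
  shows "(\<Sum>i<n. \<Sum>j<n. face_mobius_mat n x $$ (i, j)) = euler_characteristic K"
proof -
  have reindex: "(\<Sum>j<n. g (x j)) = (\<Sum>s\<in>K. g s)" for g :: "'a set \<Rightarrow> int"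
    by (rule sum.reindex_bij_betw[OF x])
  have "(\<Sum>i<n. \<Sum>j<n. face_mobius_mat n x $$ (i, j))
      = (\<Sum>i<n. \<Sum>j<n. if x i \<subseteq> x j then (-1) ^ card (x i) * (-1) ^ card (x j) else 0)"
    by (intro sum.cong) (auto simp: face_mobius_mat_def power_add)
  also have "\<dots> = (\<Sum>a\<in>K. \<Sum>j<n. if a \<subseteq> x j then (-1) ^ card a * (-1) ^ card (x j) else 0)"
    by (rule reindex)
  also have "\<dots> = (\<Sum>a\<in>K. \<Sum>s\<in>K. if a \<subseteq> s then (-1) ^ card a * (-1) ^ card s else 0)"
    by (intro sum.cong refl reindex)
  also have "\<dots> = (\<Sum>s\<in>K. (\<Sum>a\<in>K. if a \<subseteq> s then (-1) ^ card a else 0) * (-1) ^ card s)"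
    by (subst sum.swap) (auto simp: sum_distrib_right intro!: sum.cong)
  also have "\<dots> = (\<Sum>s\<in>K. (-1) ^ (card s - 1))"
  proof (rule sum.cong[OF refl])
    fix s assume "s \<in> K"
    then have "card s > 0"
      using K unfolding simplicial_complex_def by (auto simp: card_gt_0_iff)
    then show "(\<Sum>a\<in>K. if a \<subseteq> s then (-1) ^ card a else 0) * (-1) ^ card s = (-1::int) ^ (card s - 1)"
      by (simp add: simplicial_complex_sum_faces[OF K \<open>s \<in> K\<close>] power_eq_if)
  qed
  finally show ?thesis unfolding euler_characteristic_def .
qed

lemma det_face_poset_matrix:
  assumes K: "simplicial_complex K" and x: "bij_betw x {..<n} K"
  shows "\<bar>det (poset_matrix (\<subseteq>) n x)\<bar> = \<bar>1 - euler_characteristic K\<bar>"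
proof -
  let ?Z = "zeta_mat (\<subseteq>) n x" and ?W = "face_mobius_mat n x"
  have Z: "?Z \<in> carrier_mat n n" and W: "?W \<in> carrier_mat n n"
    by (auto simp: zeta_mat_def face_mobius_mat_def)
  have ZW: "?Z * ?W = 1\<^sub>m n"
    using K x by (rule zeta_mat_mult_face_mobius_mat)
  then have "det ?Z * det ?W = 1"
    by (metis det_mult[OF Z W] det_one)
  then have "\<bar>det ?Z\<bar> = 1"
    by (auto simp: zmult_eq_1_iff)
  moreover have "det (?Z - mat n n (\<lambda>_. 1)) = det ?Z * (1 - euler_characteristic K)"
    using det_minus_all_ones_mat[OF Z W ZW] sum_face_mobius_mat[OF K x] by simp
  ultimately show ?thesis
    using Z by (simp add: poset_matrix_eq_neg_zeta_minus_ones abs_mult)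
qed

lemma complex_det_eq_abs_one_minus_euler_characteristic:
  assumes K: "simplicial_complex K"
  shows "complex_det K = \<bar>1 - euler_characteristic K\<bar>"
proof -
  have "finite K"
    using K unfolding simplicial_complex_def by simp
  then have "\<exists>x. bij_betw x {..<card K} K"
    by (metis ex_bij_betw_nat_finite lessThan_atLeast0)
  then have "bij_betw (SOME x. bij_betw x {..<card K} K) {..<card K} K"
    by (rule someI_ex)
  then show ?thesis
    unfolding complex_det_def by (rule det_face_poset_matrix[OF K])
qed

theorem mainTheorem7:
  fixes K L :: "nat set set"
  assumes "simplicial_complex K" and "simplicial_complex L"
    and "same_simple_homotopy_type K L"
  shows "complex_det K = complex_det L"
  using complex_det_eq_abs_one_minus_euler_characteristic[OF assms(1)]
    complex_det_eq_abs_one_minus_euler_characteristic[OF assms(2)]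
    euler_characteristic_simple_homotopy_invariant[OF assms(3)]
  by simp

end
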